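(* Let $\alpha>2$, $\theta_0\ge 0$, $r_0>0$, and $\overline{R}_{\theta_0}=\log_2(1+\theta_0)$. For each integer $N\ge 1$ let $p_N$ be the activity probability of either TDMA or FDMA/TDMA, $$p_N^{\mathrm{TDMA}}=\tfrac1N\Pr\{K>0\},\qquad p_N^{\mathrm{FDMA/TDMA}}=\tfrac1N\textstyle\sum_{k>0}\Pr\{K=k\}\min\{k,N\},$$ with $K$ distributed as $\Pr\{K=k\}=\frac{3.5^{3.5}\Gamma(k+3.5)\tau^{3.5}}{\Gamma(3.5)k!(1+3.5\tau)^{k+3.5}}$, $k\ge0$, for some $\tau>0$. Let $F_N(\theta)=1-\frac{1}{1+p_N\rho(\theta)}$ and assume the delay satisfies $\Pr\{L=0\}=1$, so that the rate outage probability is $$F_R(N)=\begin{cases}F_N(\theta_0),& N\le \overline{R}_{\theta_0}/r_0,\\ F_N(2^{r_0N}-1),& N\ge \overline{R}_{\theta_0}/r_0.\end{cases}$$ Then every integer $N^*\ge1$ minimizing $F_R(N)$ over $N\ge 1$ satisfies $$N^*\ge \max\big\{1,\lfloor \overline{R}_{\theta_0}/r_0\rfloor\big\}.$$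
   Context: $\rho(\theta)=\theta^{2/\alpha}\int_{\theta^{-2/\alpha}}^{\infty}\frac{du}{1+u^{\alpha/2}}$ for $\theta>0$ and $\rho(0)=0$. $F_N$ is the CDF of the SIR of the typical UE when $N$ subchannels are used; $F_R(N)$ is the probability that the user rate $R=\mathbf{1}\{\mathrm{SIR}\ge\theta_0\}\log_2(1+\mathrm{SIR})/N$ is at most $r_0$. TDMA: one UE served per slot on one uniformly random subchannel out of $N$. FDMA/TDMA: UEs randomly ordered and assigned distinct uniformly random subchannels within consecutive blocks of $N$, subchannels being time-shared across blocks. *)

theory Defs
  imports "HOL-Analysis.Analysis"
begin

definition rho :: "real \<Rightarrow> real \<Rightarrow> real" where
  "rho \<alpha> \<theta> = (if \<theta> = 0 then 0 else
     \<theta> powr (2/\<alpha>) * (LBINT u:{\<theta> powr (-2/\<alpha>)..}. 1 / (1 + u powr (\<alpha>/2))))"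

definition K_pmf :: "real \<Rightarrow> nat \<Rightarrow> real" where
  "K_pmf \<tau> k = (7/2) powr (7/2) * Gamma (real k + 7/2) * \<tau> powr (7/2) /
      (Gamma (7/2) * fact k * (1 + (7/2) * \<tau>) powr (real k + 7/2))"

definition p_TDMA :: "real \<Rightarrow> nat \<Rightarrow> real" where
  "p_TDMA \<tau> N = (1 / real N) * (1 - K_pmf \<tau> 0)"

definition p_FDMA_TDMA :: "real \<Rightarrow> nat \<Rightarrow> real" where
  "p_FDMA_TDMA \<tau> N = (1 / real N) * (\<Sum>k. if k > 0 then K_pmf \<tau> k * real (min k N) else 0)"

definition F_SIR :: "real \<Rightarrow> (nat \<Rightarrow> real) \<Rightarrow> nat \<Rightarrow> real \<Rightarrow> real" where
  "F_SIR \<alpha> p N \<theta> = 1 - 1 / (1 + p N * rho \<alpha> \<theta>)"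

definition Rbar :: "real \<Rightarrow> real" where
  "Rbar \<theta>0 = log 2 (1 + \<theta>0)"

definition F_R :: "real \<Rightarrow> (nat \<Rightarrow> real) \<Rightarrow> real \<Rightarrow> real \<Rightarrow> nat \<Rightarrow> real" where
  "F_R \<alpha> p \<theta>0 r0 N = (if real N \<le> Rbar \<theta>0 / r0 then F_SIR \<alpha> p N \<theta>0
      else F_SIR \<alpha> p N (2 powr (r0 * real N) - 1))"

end

theory Submission
  imports Defs
begin

text \<open>Below the threshold \<open>Rbar \<theta>0 / r0\<close> the rate condition reduces to the fixed SIR threshold
  \<open>\<theta>0\<close>, so \<open>F_R\<close> equals \<open>1 - 1 / (1 + p N \<rho>(\<theta>0))\<close>. There \<open>\<rho>(\<theta>0) > 0\<close> and the activity
  probability \<open>p N\<close> is strictly decreasing in \<open>N\<close>, so \<open>F_R\<close> strictly decreases as long as both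
  \<open>N\<close> and \<open>N + 1\<close> lie below the threshold. Hence no \<open>N < \<lfloor>Rbar \<theta>0 / r0\<rfloor>\<close> can be a minimiser.\<close>

lemma set_integrable_inverse_one_plus_powr:
  fixes a e :: real
  assumes "a > 0" "e > 1"
  shows "set_integrable lborel {a..} (\<lambda>u. 1 / (1 + u powr e))"
proof (rule set_integrable_bound)
  have "((\<lambda>u. u powr -e) has_integral - (a powr (-e + 1)) / (-e + 1)) {a..}"
    using assms by (intro has_integral_powr_to_inf) auto
  then have "integral\<^sup>N lborel (\<lambda>u. indicator {a..} u * u powr -e) = - (a powr (-e + 1)) / (-e + 1)"
    by (intro nn_integral_has_integral_lebesgue) auto
  then show "set_integrable lborel {a..} (\<lambda>u. u powr -e)"
    unfolding set_integrable_def
    by (intro integrableI_nonneg) (auto simp: indicator_def)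
  show "set_borel_measurable lborel {a..} (\<lambda>u. 1 / (1 + u powr e))"
    unfolding set_borel_measurable_def by measurable
  show "AE u in lborel. u \<in> {a..} \<longrightarrow> norm (1 / (1 + u powr e)) \<le> norm (u powr -e)"
  proof (intro AE_I2 impI)
    fix u assume "u \<in> {a..}"
    then have "u powr e > 0" using assms by simp
    then have "1 / (1 + u powr e) \<le> 1 / u powr e"
      by (intro divide_left_mono) (auto intro!: mult_pos_pos add_pos_nonneg)
    then show "norm (1 / (1 + u powr e)) \<le> norm (u powr -e)"
      using \<open>u powr e > 0\<close> by (simp add: powr_minus_divide add_pos_nonneg)
  qed
qed

lemma set_integral_inverse_one_plus_powr_pos:
  fixes a e :: real
  assumes "a > 0" "e > 1"
  shows "(LBINT u:{a..}. 1 / (1 + u powr e)) > 0"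
proof -
  define f where "f = (\<lambda>u::real. 1 / (1 + u powr e))"
  have denom_pos: "1 + u powr e > 0" for u :: real
    by (simp add: add_pos_nonneg)
  have "(LBINT u:{a..}. f u) = integral {a..} f" and integrable: "f integrable_on {a..}"
    using set_borel_integral_eq_integral[OF set_integrable_inverse_one_plus_powr[OF assms]]
    by (auto simp: f_def)
  have cont: "continuous_on {a..a+1} f"
    unfolding f_def using assms denom_pos by (intro continuous_intros) (auto simp: less_imp_neq[symmetric])
  then have "f integrable_on {a..a+1}"
    by (rule integrable_continuous_interval)
  have "0 < f (a+1)"
    unfolding f_def using denom_pos by simp
  also have "f (a+1) = integral {a..a+1} (\<lambda>_. f (a+1))"
    by simp
  also have "\<dots> \<le> integral {a..a+1} f"
  proof (rule integral_le)
    fix u assume u: "u \<in> {a..a+1}"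
    then have "u powr e \<le> (a+1) powr e"
      using assms by (intro powr_mono2) auto
    then show "f (a+1) \<le> f u"
      unfolding f_def using denom_pos by (intro divide_left_mono) (auto intro: mult_pos_pos)
  qed (use \<open>f integrable_on {a..a+1}\<close> in auto)
  also have "\<dots> \<le> integral {a..} f"
    using integrable \<open>f integrable_on {a..a+1}\<close>
    by (intro integral_subset_le) (auto simp: f_def denom_pos less_imp_le)
  finally show ?thesis
    using \<open>(LBINT u:{a..}. f u) = integral {a..} f\<close> by (simp add: f_def)
qed

lemma rho_pos:
  assumes "\<alpha> > 2" "\<theta> > 0"
  shows "rho \<alpha> \<theta> > 0"
  using set_integral_inverse_one_plus_powr_pos[of "\<theta> powr (-2/\<alpha>)" "\<alpha>/2"] assms
  unfolding rho_def by simp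

lemma K_pmf_pos:
  assumes "\<tau> > 0"
  shows "K_pmf \<tau> k > 0"
  unfolding K_pmf_def using assms by (intro divide_pos_pos mult_pos_pos) auto

lemma K_pmf_0_less_1:
  assumes "\<tau> > 0"
  shows "K_pmf \<tau> 0 < 1"
proof -
  have "(7/2) powr (7/2) * \<tau> powr (7/2) = ((7/2) * \<tau>) powr (7/2)"
    using assms by (subst powr_mult) auto
  then have "K_pmf \<tau> 0 = ((7/2) * \<tau>) powr (7/2) / (1 + (7/2) * \<tau>) powr (7/2)"
    unfolding K_pmf_def by (simp add: less_imp_neq[symmetric])
  moreover have "((7/2) * \<tau>) powr (7/2) < (1 + (7/2) * \<tau>) powr (7/2)"
    using assms by (intro powr_less_mono2) auto
  ultimately show ?thesis
    using assms by simp
qed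

lemma K_pmf_Suc:
  assumes "\<tau> > 0"
  shows "K_pmf \<tau> (Suc k) = K_pmf \<tau> k * ((real k + 7/2) / ((real k + 1) * (1 + (7/2) * \<tau>)))"
proof -
  have "real k + 7/2 \<notin> \<int>\<^sub>\<le>\<^sub>0"
    by (auto dest: nonpos_Ints_nonpos)
  then have Gamma_Suc: "Gamma (real (Suc k) + 7/2) = (real k + 7/2) * Gamma (real k + 7/2)"
    using Gamma_plus1[of "real k + 7/2"] by (simp add: add_ac)
  have powr_Suc: "(1 + (7/2) * \<tau>) powr (real (Suc k) + 7/2)
      = (1 + (7/2) * \<tau>) * (1 + (7/2) * \<tau>) powr (real k + 7/2)"
    using assms powr_add[of "1 + (7/2) * \<tau>" "real k + 7/2" 1] by (simp add: add_ac)
  have "Gamma (7/2::real) \<noteq> 0" "(fact k::real) \<noteq> 0" "(1 + (7/2) * \<tau>) powr (real k + 7/2) \<noteq> 0"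
    "1 + (7/2) * \<tau> \<noteq> 0"
    using assms by (auto simp: less_imp_neq[symmetric])
  then show ?thesis
    unfolding K_pmf_def Gamma_Suc powr_Suc fact_Suc by (simp add: field_simps)
qed

lemma summable_K_pmf:
  assumes "\<tau> > 0"
  shows "summable (K_pmf \<tau>)"
proof (rule summable_ratio_test[where N = "nat \<lceil>2/\<tau>\<rceil>"])
  define c where "c = (2 + (7/2) * \<tau>) / (2 * (1 + (7/2) * \<tau>))"
  show "c < 1"
    unfolding c_def using assms by simp
  fix n assume "nat \<lceil>2/\<tau>\<rceil> \<le> n"
  then have "2 \<le> \<tau> * real n"
    using assms by (simp add: field_simps nat_le_iff ceiling_le_iff)
  then have "2 * (real n + 7/2) \<le> (real n + 1) * (2 + (7/2) * \<tau>)"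
    using assms by (simp add: algebra_simps)
  then have "(real n + 7/2) / (real n + 1) \<le> (2 + (7/2) * \<tau>) / 2"
    by (simp add: pos_divide_le_eq mult.commute)
  then have ratio: "(real n + 7/2) / ((real n + 1) * (1 + (7/2) * \<tau>)) \<le> c"
    unfolding c_def divide_divide_eq_left[symmetric] using assms by (intro divide_right_mono) auto
  have "K_pmf \<tau> (Suc n) \<le> c * K_pmf \<tau> n"
    using mult_left_mono[OF ratio less_imp_le[OF K_pmf_pos[OF assms, of n]]]
    by (simp only: K_pmf_Suc[OF assms] mult.commute)
  then show "norm (K_pmf \<tau> (Suc n)) \<le> c * norm (K_pmf \<tau> n)"
    using K_pmf_pos[OF assms] by (simp add: less_imp_le)
qed

lemma summable_weighted_min:
  fixes w :: "nat \<Rightarrow> real"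
  assumes "summable w" "\<And>k. 0 \<le> w k"
  shows "summable (\<lambda>k. w k * real (min k M))"
proof (rule summable_comparison_test')
  show "summable (\<lambda>k. real M * w k)"
    using assms(1) by (rule summable_mult)
  show "norm (w k * real (min k M)) \<le> real M * w k" for k
    using assms(2)[of k] mult_left_mono[of "real (min k M)" "real M" "w k"] by (simp add: mult.commute)
qed

lemma weighted_min_average_strict_decreasing:
  fixes w :: "nat \<Rightarrow> real"
  assumes w: "summable w" "\<And>k. 0 \<le> w k" "w 1 > 0" and "N \<ge> 1"
  shows "(\<Sum>k. w k * real (min k (Suc N))) / real (Suc N) < (\<Sum>k. w k * real (min k N)) / real N"
proof -
  define g where "g M k = w k * real (min k M) / real M" for M k
  have summable_g: "summable (g M)" for M
    unfolding g_def by (intro summable_divide summable_weighted_min w)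
  have g_mono: "g (Suc N) k \<le> g N k" for k
  proof (cases "k \<le> N")
    case True
    then show ?thesis
      unfolding g_def using w(2)[of k] \<open>N \<ge> 1\<close>
      by (simp add: divide_left_mono mult_nonneg_nonneg)
  next
    case False
    then show ?thesis
      unfolding g_def using \<open>N \<ge> 1\<close> by simp
  qed
  have "g (Suc N) 1 < g N 1"
    unfolding g_def using w(3) \<open>N \<ge> 1\<close> by (simp add: frac_less2)
  then have "0 < (\<Sum>k. g N k - g (Suc N) k)"
    using g_mono by (intro suminf_pos2[of _ 1] summable_diff summable_g) auto
  moreover have "(\<Sum>k. g M k) = (\<Sum>k. w k * real (min k M)) / real M" for M
    unfolding g_def by (rule suminf_divide[OF summable_weighted_min[OF w(1,2)]])
  ultimately show ?thesis
    using suminf_diff[OF summable_g summable_g, of N "Suc N"] by simp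
qed

lemma p_FDMA_TDMA_eq:
  "p_FDMA_TDMA \<tau> N = (\<Sum>k. K_pmf \<tau> k * real (min k N)) / real N"
proof -
  have "(if k > 0 then K_pmf \<tau> k * real (min k N) else 0) = K_pmf \<tau> k * real (min k N)" for k
    by simp
  then show ?thesis
    unfolding p_FDMA_TDMA_def by simp
qed

lemma activity_prob_nonneg:
  assumes "\<tau> > 0" "p = p_TDMA \<tau> \<or> p = p_FDMA_TDMA \<tau>"
  shows "0 \<le> p N"
  using assms K_pmf_0_less_1[OF assms(1)] K_pmf_pos[OF assms(1)]
  by (auto simp: p_TDMA_def p_FDMA_TDMA_eq less_imp_le
      intro!: divide_nonneg_nonneg suminf_nonneg summable_weighted_min summable_K_pmf)

lemma activity_prob_strict_decreasing:
  assumes "\<tau> > 0" "p = p_TDMA \<tau> \<or> p = p_FDMA_TDMA \<tau>" "N \<ge> 1"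
  shows "p (Suc N) < p N"
  using assms(2)
proof
  assume "p = p_TDMA \<tau>"
  then show ?thesis
    using K_pmf_0_less_1[OF assms(1)] \<open>N \<ge> 1\<close> by (simp add: p_TDMA_def frac_less2)
next
  assume p: "p = p_FDMA_TDMA \<tau>"
  show ?thesis
    unfolding p p_FDMA_TDMA_eq
    by (rule weighted_min_average_strict_decreasing)
      (use K_pmf_pos[OF assms(1)] summable_K_pmf[OF assms(1)] \<open>N \<ge> 1\<close> in \<open>auto simp: less_imp_le\<close>)
qed

lemma F_SIR_strict_mono:
  assumes "rho \<alpha> \<theta> > 0" "0 \<le> p M" "p M < p N"
  shows "F_SIR \<alpha> p M \<theta> < F_SIR \<alpha> p N \<theta>"
proof -
  have "p M * rho \<alpha> \<theta> < p N * rho \<alpha> \<theta>" "0 \<le> p M * rho \<alpha> \<theta>"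
    using assms by simp_all
  then show ?thesis
    unfolding F_SIR_def by (simp add: divide_strict_left_mono)
qed

theorem proposition2:
  fixes \<alpha> \<theta>0 r0 \<tau> :: real and p :: "nat \<Rightarrow> real" and Nstar :: nat
  assumes "\<alpha> > 2" and "\<theta>0 \<ge> 0" and "r0 > 0" and "\<tau> > 0"
    and "p = p_TDMA \<tau> \<or> p = p_FDMA_TDMA \<tau>"
    and "Nstar \<ge> 1"
    and "\<forall>N\<ge>1. F_R \<alpha> p \<theta>0 r0 Nstar \<le> F_R \<alpha> p \<theta>0 r0 N"
  shows "int Nstar \<ge> max 1 \<lfloor>Rbar \<theta>0 / r0\<rfloor>"
proof (rule ccontr)
  assume "\<not> ?thesis"
  then have "int (Suc Nstar) \<le> \<lfloor>Rbar \<theta>0 / r0\<rfloor>"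
    using \<open>Nstar \<ge> 1\<close> by linarith
  then have below: "real (Suc Nstar) \<le> Rbar \<theta>0 / r0"
    by (simp add: le_floor_iff)
  then have "Rbar \<theta>0 / r0 > 0"
    by (smt (verit) of_nat_0_le_iff of_nat_Suc)
  then have "Rbar \<theta>0 > 0"
    using \<open>r0 > 0\<close> by (simp add: zero_less_divide_iff)
  then have "\<theta>0 > 0"
    using \<open>\<theta>0 \<ge> 0\<close> unfolding Rbar_def by fastforce
  have "F_SIR \<alpha> p (Suc Nstar) \<theta>0 < F_SIR \<alpha> p Nstar \<theta>0"
    using assms(4-6) by (intro F_SIR_strict_mono rho_pos \<open>\<alpha> > 2\<close> \<open>\<theta>0 > 0\<close>
        activity_prob_nonneg activity_prob_strict_decreasing)
  then have "F_R \<alpha> p \<theta>0 r0 (Suc Nstar) < F_R \<alpha> p \<theta>0 r0 Nstar"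
    unfolding F_R_def using below by simp
  moreover have "F_R \<alpha> p \<theta>0 r0 Nstar \<le> F_R \<alpha> p \<theta>0 r0 (Suc Nstar)"
    using assms(7) by simp
  ultimately show False
    by simp
qed

end
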